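(* Let $A$ be a set, $T=A^*$, $Y$ a semilattice and $\cdot$ a left partial action of $T$ on $Y$ satisfying axioms (A), (B), (C) which is a partially defined action and such that $M(T,Y)$ is an ultra $F$-restriction monoid. For $v\in T$ let $d_v$ be the greatest element of $\mathrm{dom}(\varphi_v)$. Then the poset $X$ (defined in the context) is a meet semilattice, and for $[e,v],[f,u]\in X$, $$[e,v]\wedge[f,u]=[\,v'\cdot(e\wedge d_{v'})\wedge u'\cdot(f\wedge d_{u'}),\,k\,],$$ where $k$ is the longest common prefix of $v$ and $u$, and $v=kv'$, $u=ku'$.
   Context: $A^*$ is the free monoid on $A$. A left partial action of $T$ on $Y$: $1\cdot y=y$ always defined; if $t\cdot y$, $s\cdot(t\cdot y)$ are defined then $(st)\cdot y$ is defined and equals it. With $\varphi_t\colon y\mapsto t\cdot y$: (A) $\mathrm{dom}\varphi_t$, $\mathrm{ran}\varphi_t$ are order ideals of $Y$; (B) $\varphi_t$ is an order-isomorphism between them; (C) $\mathrm{dom}\varphi_t\neq\varnothing$. Partially defined action: $(st)\cdot x$ defined iff $t\cdot x$ and $s\cdot(t\cdot x)$ defined. Reverse: $y\circ t=\varphi_t^{-1}(y)$ for $y\in\mathrm{ran}\varphi_t$. $M(T,Y)=\{(y,t)\colon y\circ t\text{ defined}\}$ with $(x,s)(y,t)=(s\cdot((x\circ s)\wedge y),st)$, $(y,t)^*=(y\circ t,1)$, $(y,t)^+=(y,1)$; it is a proper restriction semigroup. A restriction monoid is ultra $F$-restriction if it is proper, every class of the least congruence $\sigma$ identifying projections has a maximum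 in the natural order ($a\le b\iff a=eb$ for a projection $e$), and its underlying left partial action (of $S/\sigma$ on $P(S)$: $t\cdot e$ defined iff some $a\in t$ has $a^*\ge e$, value $(ae)^+$) is a partially defined action. Construction of $X$: for $(x,s),(y,t)\in Y\times T$ put $(x,s)\to(y,t)$ if there is $p\in T$ with $s=tp$, $p\cdot x$ defined and $p\cdot x=y$. Let $\sim$ be the equivalence generated by $\to$. On $(Y\times T)/\!\sim$ put $C\ge D$ if there are $(x,s)\in C$, $(y,s)\in D$ with $x\ge y$ (a preorder). Identify classes that are mutually $\le$ to get the poset $X$, whose elements are written $[x,s]$, with the induced order. *)

theory Defs
  imports Main "HOL-Library.Sublist"
begin

(* T = A^* is 'a list (product = append, identity = []).
   Y is a meet semilattice, the type 'y :: semilattice_inf.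
   A partial map t . y is modelled as  act t y :: 'y option. *)

definition left_partial_action :: "('a list \<Rightarrow> 'y \<Rightarrow> 'y option) \<Rightarrow> bool" where
  "left_partial_action act \<longleftrightarrow>
     (\<forall>y. act [] y = Some y) \<and>
     (\<forall>s t y z w. act t y = Some z \<longrightarrow> act s z = Some w \<longrightarrow> act (s @ t) y = Some w)"

definition axiom_A :: "('a list \<Rightarrow> 'y::order \<Rightarrow> 'y option) \<Rightarrow> bool" where
  "axiom_A act \<longleftrightarrow>
     (\<forall>t x y. act t x \<noteq> None \<longrightarrow> y \<le> x \<longrightarrow> act t y \<noteq> None) \<and>
     (\<forall>t x z w. act t x = Some z \<longrightarrow> w \<le> z \<longrightarrow> (\<exists>y. act t y = Some w))"

definition axiom_B :: "('a list \<Rightarrow> 'y::order \<Rightarrow> 'y option) \<Rightarrow> bool" where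
  "axiom_B act \<longleftrightarrow>
     (\<forall>t x y x' y'. act t x = Some x' \<longrightarrow> act t y = Some y' \<longrightarrow> (x \<le> y \<longleftrightarrow> x' \<le> y'))"

definition axiom_C :: "('a list \<Rightarrow> 'y \<Rightarrow> 'y option) \<Rightarrow> bool" where
  "axiom_C act \<longleftrightarrow> (\<forall>t. \<exists>y. act t y \<noteq> None)"

definition partially_defined_action :: "('a list \<Rightarrow> 'y \<Rightarrow> 'y option) \<Rightarrow> bool" where
  "partially_defined_action act \<longleftrightarrow>
     (\<forall>s t x. act (s @ t) x \<noteq> None \<longleftrightarrow> (\<exists>z. act t x = Some z \<and> act s z \<noteq> None))"

definition rev_act :: "('a list \<Rightarrow> 'y \<Rightarrow> 'y option) \<Rightarrow> 'y \<Rightarrow> 'a list \<Rightarrow> 'y" where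
  "rev_act act y t = (THE x. act t x = Some y)"

definition Mset :: "('a list \<Rightarrow> 'y \<Rightarrow> 'y option) \<Rightarrow> ('y \<times> 'a list) set" where
  "Mset act = {(y, t). \<exists>x. act t x = Some y}"

definition Mmult :: "('a list \<Rightarrow> 'y::semilattice_inf \<Rightarrow> 'y option) \<Rightarrow>
    'y \<times> 'a list \<Rightarrow> 'y \<times> 'a list \<Rightarrow> 'y \<times> 'a list" where
  "Mmult act p q = (case p of (x, s) \<Rightarrow> case q of (y, t) \<Rightarrow>
      (the (act s (inf (rev_act act x s) y)), s @ t))"

definition Mstar :: "('a list \<Rightarrow> 'y \<Rightarrow> 'y option) \<Rightarrow> 'y \<times> 'a list \<Rightarrow> 'y \<times> 'a list" where
  "Mstar act p = (case p of (y, t) \<Rightarrow> (rev_act act y t, []))"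

definition Mplus :: "'y \<times> 'a list \<Rightarrow> 'y \<times> 'a list" where
  "Mplus p = (case p of (y, t) \<Rightarrow> (y, []))"

definition restriction_monoid ::
  "'m set \<Rightarrow> ('m \<Rightarrow> 'm \<Rightarrow> 'm) \<Rightarrow> ('m \<Rightarrow> 'm) \<Rightarrow> ('m \<Rightarrow> 'm) \<Rightarrow> bool" where
  "restriction_monoid S mult star pl \<longleftrightarrow>
     (\<forall>a\<in>S. \<forall>b\<in>S. mult a b \<in> S) \<and> (\<forall>a\<in>S. star a \<in> S \<and> pl a \<in> S) \<and>
     (\<forall>a\<in>S. \<forall>b\<in>S. \<forall>c\<in>S. mult (mult a b) c = mult a (mult b c)) \<and>
     (\<forall>a\<in>S. \<forall>b\<in>S.
        mult a (star a) = a \<and> mult (star a) (star b) = mult (star b) (star a) \<and>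
        star (mult a (star b)) = mult (star a) (star b) \<and>
        mult (star a) b = mult b (star (mult a b)) \<and>
        mult (pl a) a = a \<and> mult (pl a) (pl b) = mult (pl b) (pl a) \<and>
        pl (mult (pl a) b) = mult (pl a) (pl b) \<and>
        mult a (pl b) = mult (pl (mult a b)) a \<and>
        pl (star a) = star a \<and> star (pl a) = pl a) \<and>
     (\<exists>one\<in>S. \<forall>a\<in>S. mult one a = a \<and> mult a one = a)"

definition projections :: "'m set \<Rightarrow> ('m \<Rightarrow> 'm) \<Rightarrow> 'm set" where
  "projections S star = star ` S"

definition is_congruence ::
  "'m set \<Rightarrow> ('m \<Rightarrow> 'm \<Rightarrow> 'm) \<Rightarrow> ('m \<Rightarrow> 'm) \<Rightarrow> ('m \<Rightarrow> 'm) \<Rightarrow> 'm rel \<Rightarrow> bool" where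
  "is_congruence S mult star pl R \<longleftrightarrow> equiv S R \<and>
     (\<forall>a b c d. (a, b) \<in> R \<longrightarrow> (c, d) \<in> R \<longrightarrow> (mult a c, mult b d) \<in> R) \<and>
     (\<forall>a b. (a, b) \<in> R \<longrightarrow> (star a, star b) \<in> R \<and> (pl a, pl b) \<in> R)"

definition sigma ::
  "'m set \<Rightarrow> ('m \<Rightarrow> 'm \<Rightarrow> 'm) \<Rightarrow> ('m \<Rightarrow> 'm) \<Rightarrow> ('m \<Rightarrow> 'm) \<Rightarrow> 'm rel" where
  "sigma S mult star pl = \<Inter> {R. is_congruence S mult star pl R \<and>
       projections S star \<times> projections S star \<subseteq> R}"

definition nat_le :: "'m set \<Rightarrow> ('m \<Rightarrow> 'm \<Rightarrow> 'm) \<Rightarrow> ('m \<Rightarrow> 'm) \<Rightarrow> 'm \<Rightarrow> 'm \<Rightarrow> bool" where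
  "nat_le S mult star a b \<longleftrightarrow> (\<exists>e\<in>projections S star. a = mult e b)"

definition proper ::
  "'m set \<Rightarrow> ('m \<Rightarrow> 'm \<Rightarrow> 'm) \<Rightarrow> ('m \<Rightarrow> 'm) \<Rightarrow> ('m \<Rightarrow> 'm) \<Rightarrow> bool" where
  "proper S mult star pl \<longleftrightarrow> (\<forall>a\<in>S. \<forall>b\<in>S. (a, b) \<in> sigma S mult star pl \<longrightarrow>
      (star a = star b \<longrightarrow> a = b) \<and> (pl a = pl b \<longrightarrow> a = b))"

(* underlying left partial action of S/sigma on P(S):
   t . e defined iff some a in t has a* >= e; value (a e)^+ *)
definition ua_defined ::
  "('m \<Rightarrow> 'm \<Rightarrow> 'm) \<Rightarrow> ('m \<Rightarrow> 'm) \<Rightarrow> 'm set \<Rightarrow> 'm \<Rightarrow> bool" where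
  "ua_defined mult star t e \<longleftrightarrow> (\<exists>a\<in>t. e = mult e (star a))"

definition ua_value ::
  "('m \<Rightarrow> 'm \<Rightarrow> 'm) \<Rightarrow> ('m \<Rightarrow> 'm) \<Rightarrow> ('m \<Rightarrow> 'm) \<Rightarrow> 'm set \<Rightarrow> 'm \<Rightarrow> 'm" where
  "ua_value mult star pl t e = pl (mult (SOME a. a \<in> t \<and> e = mult e (star a)) e)"

definition ultra_F_restriction ::
  "'m set \<Rightarrow> ('m \<Rightarrow> 'm \<Rightarrow> 'm) \<Rightarrow> ('m \<Rightarrow> 'm) \<Rightarrow> ('m \<Rightarrow> 'm) \<Rightarrow> bool" where
  "ultra_F_restriction S mult star pl \<longleftrightarrow>
     restriction_monoid S mult star pl \<and>
     proper S mult star pl \<and>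
     (\<forall>a\<in>S. \<exists>m\<in>sigma S mult star pl `` {a}.
         \<forall>b\<in>sigma S mult star pl `` {a}. nat_le S mult star b m) \<and>
     (\<forall>a\<in>S. \<forall>b\<in>S. \<forall>e\<in>projections S star.
        ua_defined mult star (sigma S mult star pl `` {mult a b}) e \<longleftrightarrow>
        (ua_defined mult star (sigma S mult star pl `` {b}) e \<and>
         ua_defined mult star (sigma S mult star pl `` {a})
            (ua_value mult star pl (sigma S mult star pl `` {b}) e)))"

definition Xstep :: "('a list \<Rightarrow> 'y \<Rightarrow> 'y option) \<Rightarrow> 'y \<times> 'a list \<Rightarrow> 'y \<times> 'a list \<Rightarrow> bool" where
  "Xstep act P Q \<longleftrightarrow> (case P of (x, s) \<Rightarrow> case Q of (y, t) \<Rightarrow>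
      \<exists>p. s = t @ p \<and> act p x = Some y)"

definition Xsim :: "('a list \<Rightarrow> 'y \<Rightarrow> 'y option) \<Rightarrow> 'y \<times> 'a list \<Rightarrow> 'y \<times> 'a list \<Rightarrow> bool" where
  "Xsim act = (\<lambda>P Q. Xstep act P Q \<or> Xstep act Q P)\<^sup>*\<^sup>*"

(* This is the preorder on classes, read on representatives; the order of X
   is the induced one: [P] \<le> [Q] in X iff Xle act P Q. *)
definition Xle :: "('a list \<Rightarrow> 'y::order \<Rightarrow> 'y option) \<Rightarrow> 'y \<times> 'a list \<Rightarrow> 'y \<times> 'a list \<Rightarrow> bool" where
  "Xle act D C \<longleftrightarrow> (\<exists>x y s. Xsim act C (x, s) \<and> Xsim act D (y, s) \<and> y \<le> x)"

definition dgr :: "('a list \<Rightarrow> 'y::order \<Rightarrow> 'y option) \<Rightarrow> 'a list \<Rightarrow> 'y" where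
  "dgr act v = (GREATEST y. act v y \<noteq> None)"

end

theory Submission
  imports Defs
begin

text \<open>
  Reduction \<open>\<rightarrow>\<close> is confluent, so two pairs are equivalent iff they reduce to a common pair.
  Using (A) and (B), this makes \<open>z \<le> [e, v]\<close> equivalent to \<open>z = [x, v]\<close> for some \<open>x \<le> e\<close>.
  A common lower bound \<open>z = [x, v] = [y, u]\<close> of \<open>[e, v]\<close> and \<open>[f, u]\<close> then reduces to a common pair
  whose word is a common prefix of \<open>v\<close> and \<open>u\<close>, hence a prefix of \<open>k\<close>; cancelling the partial
  action shows \<open>v'\<cdot>x = u'\<cdot>y\<close>. Since \<open>x \<le> e \<sqinter> d\<^sub>v\<^sub>'\<close> and \<open>y \<le> f \<sqinter> d\<^sub>u\<^sub>'\<close>, this element lies below both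
  components of the claimed meet. The greatest elements \<open>d\<^sub>v\<close> exist because the \<open>\<sigma>\<close>-class of
  \<open>(y, v)\<close> in \<open>M(T, Y)\<close> consists of all \<open>(y', v)\<close>, and its maximum must be \<open>(v\<cdot>d\<^sub>v, v)\<close>.
\<close>

locale partial_action =
  fixes act :: "'a list \<Rightarrow> 'y \<Rightarrow> 'y option"
  assumes left_partial: "left_partial_action act"
    and partially_defined: "partially_defined_action act"
begin

lemma act_Nil [simp]: "act [] y = Some y"
  using left_partial unfolding left_partial_action_def by blast

lemma act_append: "act t y = Some z \<Longrightarrow> act s z = Some w \<Longrightarrow> act (s @ t) y = Some w"
  using left_partial unfolding left_partial_action_def by blast

lemma act_append_split:
  assumes "act (s @ t) x = Some w"
  obtains z where "act t x = Some z" and "act s z = Some w"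
proof -
  from assms obtain z w' where z: "act t x = Some z" and w': "act s z = Some w'"
    using partially_defined unfolding partially_defined_action_def by blast
  with assms act_append[OF z w'] show thesis using that by simp
qed

lemma Xstep_refl: "Xstep act P P"
  by (cases P) (auto simp: Xstep_def intro!: exI[of _ "[]"])

lemma Xstep_trans:
  assumes "Xstep act P Q" and "Xstep act Q R"
  shows "Xstep act P R"
proof -
  obtain x s y t w r where PQR: "P = (x, s)" "Q = (y, t)" "R = (w, r)"
    by (metis prod.exhaust)
  from assms obtain p q where "s = t @ p" "act p x = Some y" "t = r @ q" "act q y = Some w"
    by (auto simp: Xstep_def PQR)
  then show ?thesis
    using act_append by (auto simp: Xstep_def PQR)
qed

text \<open>Of two reducts of one pair, the one with the longer word reduces to the other.\<close>
lemma Xstep_diamond: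
  assumes "Xstep act P Q" and "Xstep act P R"
  shows "\<exists>W. Xstep act Q W \<and> Xstep act R W"
proof -
  have comparable: "Xstep act Q R"
    if "Xstep act P Q" "Xstep act P R" "length (snd R) \<le> length (snd Q)" for Q R
  proof -
    obtain x s y1 t1 y2 t2 where PQR: "P = (x, s)" "Q = (y1, t1)" "R = (y2, t2)"
      by (metis prod.exhaust)
    from that(1) obtain p1 where p1: "s = t1 @ p1" "act p1 x = Some y1"
      by (auto simp: Xstep_def PQR)
    from that(2) obtain p2 where p2: "s = t2 @ p2" "act p2 x = Some y2"
      by (auto simp: Xstep_def PQR)
    from p1(1) p2(1) that(3) obtain us where "t1 = t2 @ us" "p2 = us @ p1"
      by (auto simp: PQR append_eq_append_conv2)
    moreover from this p1(2) p2(2) have "act us y1 = Some y2"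
      by (auto elim: act_append_split)
    ultimately show ?thesis by (auto simp: Xstep_def PQR)
  qed
  show ?thesis
  proof (cases "length (snd R) \<le> length (snd Q)")
    case True
    then show ?thesis using comparable assms Xstep_refl by blast
  next
    case False
    then show ?thesis using comparable assms Xstep_refl by (meson nle_le)
  qed
qed

lemma Xsim_iff_joinable: "Xsim act P Q \<longleftrightarrow> (\<exists>R. Xstep act P R \<and> Xstep act Q R)"
proof
  show "Xsim act P Q \<Longrightarrow> \<exists>R. Xstep act P R \<and> Xstep act Q R"
    unfolding Xsim_def
  proof (induction rule: rtranclp_induct)
    case base
    then show ?case using Xstep_refl by blast
  next
    case (step Q Q')
    then obtain R where R: "Xstep act P R" "Xstep act Q R" by blast
    from step(2) show ?case
      by (metis R Xstep_diamond Xstep_trans)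
  qed
next
  assume "\<exists>R. Xstep act P R \<and> Xstep act Q R"
  then obtain R where "Xstep act P R" "Xstep act Q R" by blast
  then show "Xsim act P Q"
    unfolding Xsim_def
    by (metis (mono_tags, lifting) converse_rtranclp_into_rtranclp r_into_rtranclp)
qed

lemma Xstep_imp_Xsim: "Xstep act P Q \<Longrightarrow> Xsim act P Q"
  using Xsim_iff_joinable Xstep_refl by blast

lemma Xsim_act: "act p x = Some y \<Longrightarrow> Xsim act (x, k @ p) (y, k)"
  by (auto simp: Xstep_def intro: Xstep_imp_Xsim)

lemma Xsim_sym: "Xsim act P Q \<Longrightarrow> Xsim act Q P"
  by (auto simp: Xsim_iff_joinable)

lemma Xsim_trans: "Xsim act P Q \<Longrightarrow> Xsim act Q R \<Longrightarrow> Xsim act P R"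
  unfolding Xsim_def by (rule rtranclp_trans)

end

locale ordered_partial_action = partial_action act
  for act :: "'a list \<Rightarrow> 'y::order \<Rightarrow> 'y option" +
  assumes ideal_domains: "axiom_A act"
    and order_isomorphism: "axiom_B act"
begin

lemma act_defined_downward: "act t x \<noteq> None \<Longrightarrow> y \<le> x \<Longrightarrow> act t y \<noteq> None"
  using ideal_domains unfolding axiom_A_def by blast

lemma act_range_downward:
  assumes "act t x = Some z" and "w \<le> z"
  obtains y where "act t y = Some w"
  using assms ideal_domains unfolding axiom_A_def by blast

lemma act_le_iff: "act t x = Some x' \<Longrightarrow> act t y = Some y' \<Longrightarrow> x \<le> y \<longleftrightarrow> x' \<le> y'"
  using order_isomorphism unfolding axiom_B_def by blast

lemma act_inj: "act t x = Some w \<Longrightarrow> act t y = Some w \<Longrightarrow> x = y"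
  using act_le_iff[of t x w y w] act_le_iff[of t y w x w] by (auto intro: order.antisym)

lemma Xle_iff_Xsim_below: "Xle act z (e, v) \<longleftrightarrow> (\<exists>x \<le> e. Xsim act z (x, v))"
proof
  assume "Xle act z (e, v)"
  then obtain x y s where sim_e: "Xsim act (e, v) (x, s)" and sim_z: "Xsim act z (y, s)"
    and "y \<le> x"
    unfolding Xle_def by blast
  from sim_e obtain c r q1 q where q1: "v = r @ q1" "act q1 e = Some c"
    and q: "s = r @ q" "act q x = Some c"
    by (auto simp: Xsim_iff_joinable Xstep_def)
  from act_defined_downward[of q x y] q(2) \<open>y \<le> x\<close> obtain c' where c': "act q y = Some c'"
    by auto
  with q(2) \<open>y \<le> x\<close> have "c' \<le> c" by (simp add: act_le_iff)
  with q1(2) obtain x' where x': "act q1 x' = Some c'" by (rule act_range_downward)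
  with q1(2) \<open>c' \<le> c\<close> have "x' \<le> e" by (simp add: act_le_iff)
  moreover have "Xsim act (y, s) (c', r)" "Xsim act (x', v) (c', r)"
    using Xsim_act[OF c'] Xsim_act[OF x'] q(1) q1(1) by simp_all
  ultimately show "\<exists>x \<le> e. Xsim act z (x, v)"
    using sim_z by (meson Xsim_sym Xsim_trans)
next
  assume "\<exists>x \<le> e. Xsim act z (x, v)"
  then show "Xle act z (e, v)"
    unfolding Xle_def Xsim_def by blast
qed

text \<open>Equivalent pairs reduce to a common pair, whose word is a common prefix of their words.\<close>
lemma Xsim_reduce_to_common_prefix:
  assumes sim: "Xsim act (x, k @ v') (y, k @ u')"
    and lcp: "\<forall>r. prefix r (k @ v') \<and> prefix r (k @ u') \<longrightarrow> prefix r k"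
  shows "\<exists>w. act v' x = Some w \<and> act u' y = Some w"
proof -
  from sim obtain d r p1 p2 where p1: "k @ v' = r @ p1" "act p1 x = Some d"
    and p2: "k @ u' = r @ p2" "act p2 y = Some d"
    by (auto simp: Xsim_iff_joinable Xstep_def)
  from p1(1) p2(1) lcp obtain g where g: "k = r @ g"
    by (metis prefix_def)
  from p1 g obtain w1 where "act v' x = Some w1" "act g w1 = Some d"
    by (auto elim: act_append_split)
  moreover from p2 g obtain w2 where "act u' y = Some w2" "act g w2 = Some d"
    by (auto elim: act_append_split)
  ultimately show ?thesis using act_inj by blast
qed

end

locale ultra_F_partial_action = ordered_partial_action act
  for act :: "'a list \<Rightarrow> 'y::semilattice_inf \<Rightarrow> 'y option" +
  assumes nonempty_domains: "axiom_C act"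
    and ultra_F: "ultra_F_restriction (Mset act) (Mmult act) (Mstar act) Mplus"
begin

abbreviation sigma_M :: "('y \<times> 'a list) rel" where
  "sigma_M \<equiv> sigma (Mset act) (Mmult act) (Mstar act) Mplus"

lemma rev_act_Nil [simp]: "rev_act act y [] = y"
  unfolding rev_act_def by simp

lemma Mmult_projection [simp]: "Mmult act (y', []) (y, t) = (inf y' y, t)"
  by (simp add: Mmult_def)

lemma Mset_iff: "(y, t) \<in> Mset act \<longleftrightarrow> (\<exists>x. act t x = Some y)"
  by (simp add: Mset_def)

lemma projections_M: "projections (Mset act) (Mstar act) = {(y, []) | y. True}"
proof (intro set_eqI iffI)
  fix p :: "'y \<times> 'a list"
  assume "p \<in> {(y, []) | y. True}"
  then obtain y where "p = (y, [])" by blast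
  moreover have "(y, []) \<in> Mset act" "Mstar act (y, []) = (y, [])"
    by (auto simp: Mset_iff Mstar_def)
  ultimately show "p \<in> projections (Mset act) (Mstar act)"
    unfolding projections_def by (metis image_eqI)
qed (auto simp: projections_def Mstar_def)

lemma sigma_M_same_word: "sigma_M \<subseteq> {(a, b). a \<in> Mset act \<and> b \<in> Mset act \<and> snd a = snd b}"
proof -
  define R where "R = {(a, b). a \<in> Mset act \<and> b \<in> Mset act \<and> snd a = snd b}"
  have "restriction_monoid (Mset act) (Mmult act) (Mstar act) Mplus"
    using ultra_F unfolding ultra_F_restriction_def by blast
  then have "is_congruence (Mset act) (Mmult act) (Mstar act) Mplus R"
    unfolding restriction_monoid_def is_congruence_def equiv_def refl_on_def sym_def trans_def
      R_def
    by (auto simp: Mmult_def Mstar_def Mplus_def split: prod.splits)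
  moreover have "projections (Mset act) (Mstar act) \<times> projections (Mset act) (Mstar act) \<subseteq> R"
    by (auto simp: projections_M R_def Mset_iff)
  ultimately show ?thesis
    unfolding sigma_def R_def by blast
qed

text \<open>Multiplying by the projections \<open>(y, [])\<close> and \<open>(y', [])\<close> relates both pairs to \<open>(y \<sqinter> y', t)\<close>.\<close>
lemma sigma_M_same_word_intro:
  assumes "(y, t) \<in> Mset act" and "(y', t) \<in> Mset act"
  shows "((y, t), (y', t)) \<in> sigma_M"
  unfolding sigma_def
proof (rule InterI)
  fix R
  assume "R \<in> {R. is_congruence (Mset act) (Mmult act) (Mstar act) Mplus R \<and>
    projections (Mset act) (Mstar act) \<times> projections (Mset act) (Mstar act) \<subseteq> R}"
  then have equiv: "equiv (Mset act) R"
    and mult: "\<And>a b c d. (a, b) \<in> R \<Longrightarrow> (c, d) \<in> R \<Longrightarrow> (Mmult act a c, Mmult act b d) \<in> R"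
    and proj: "\<And>w w'. ((w, []), (w', [])) \<in> R"
    by (auto simp: is_congruence_def projections_M)
  have "((y, t), (y, t)) \<in> R" "((y', t), (y', t)) \<in> R"
    using equiv assms by (auto simp: equiv_def refl_on_def)
  from mult[OF proj[of y y'] this(1)] mult[OF proj[of y' y] this(2)]
  have "((y, t), (inf y' y, t)) \<in> R" "((y', t), (inf y' y, t)) \<in> R"
    by (simp_all add: inf_commute)
  with equiv show "((y, t), (y', t)) \<in> R"
    unfolding equiv_def sym_def trans_def by blast
qed

text \<open>The maximum of the \<open>\<sigma>\<close>-class of any \<open>(y, v)\<close> is \<open>(v\<cdot>d\<^sub>v, v)\<close>.\<close>
lemma dgr_greatest:
  shows dgr_in_domain: "act v (dgr act v) \<noteq> None"
    and le_dgr: "act v x \<noteq> None \<Longrightarrow> x \<le> dgr act v"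
proof -
  obtain x0 y0 where "act v x0 = Some y0"
    using nonempty_domains unfolding axiom_C_def by blast
  then have y0: "(y0, v) \<in> Mset act" by (auto simp: Mset_iff)
  then obtain m where m: "m \<in> sigma_M `` {(y0, v)}"
    and max: "\<forall>b \<in> sigma_M `` {(y0, v)}. nat_le (Mset act) (Mmult act) (Mstar act) b m"
    using ultra_F unfolding ultra_F_restriction_def by blast
  from m sigma_M_same_word obtain M where "m = (M, v)" "(M, v) \<in> Mset act"
    by (cases m) fastforce
  then obtain dM where dM: "act v dM = Some M"
    by (auto simp: Mset_iff)
  have "w \<le> M" if "act v x = Some w" for x w
  proof -
    from that y0 have "((y0, v), (w, v)) \<in> sigma_M"
      by (intro sigma_M_same_word_intro) (auto simp: Mset_iff)
    with max \<open>m = (M, v)\<close> obtain e where "e \<in> projections (Mset act) (Mstar act)"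
      and "(w, v) = Mmult act e (M, v)"
      unfolding nat_le_def by blast
    then obtain y where "(w, v) = Mmult act (y, []) (M, v)"
      by (auto simp: projections_M)
    then show "w \<le> M" by simp
  qed
  then have great: "x \<le> dM" if "act v x \<noteq> None" for x
    using that dM by (auto simp: act_le_iff)
  with dM have "dgr act v = dM"
    unfolding dgr_def by (intro Greatest_equality) auto
  with dM great show "act v (dgr act v) \<noteq> None" "act v x \<noteq> None \<Longrightarrow> x \<le> dgr act v"
    by auto
qed

lemma act_inf_dgr: "act v (inf e (dgr act v)) = Some (the (act v (inf e (dgr act v))))"
  using act_defined_downward[OF dgr_in_domain, of "inf e (dgr act v)"] by auto

lemma Xle_at_prefix:
  assumes "prefix k v"
    and "w \<le> the (act (drop (length k) v) (inf e (dgr act (drop (length k) v))))"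
  shows "Xle act (w, k) (e, v)"
proof -
  let ?v' = "drop (length k) v"
  from assms(1) have v: "v = k @ ?v'"
    by (metis append_eq_conv_conj prefix_def)
  obtain x where x: "act ?v' x = Some w"
    using act_range_downward[OF act_inf_dgr assms(2)] .
  have "x \<le> e"
    using act_le_iff[OF x act_inf_dgr, of e] assms(2) by simp
  moreover have "Xsim act (w, k) (x, v)"
    using Xsim_act[OF x] v by (metis Xsim_sym)
  ultimately show ?thesis
    by (auto simp: Xle_iff_Xsim_below)
qed

lemma Xle_longest_common_prefix:
  fixes v u :: "'a list"
  defines "k \<equiv> longest_common_prefix v u"
  assumes "Xle act z (e, v)" and "Xle act z (f, u)"
  shows "Xle act z (inf (the (act (drop (length k) v) (inf e (dgr act (drop (length k) v)))))
                        (the (act (drop (length k) u) (inf f (dgr act (drop (length k) u))))), k)"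
proof -
  define v' u' where "v' = drop (length k) v" and "u' = drop (length k) u"
  have "prefix k v" "prefix k u"
    unfolding k_def by (simp_all add: longest_common_prefix_prefix1 longest_common_prefix_prefix2)
  then have v: "v = k @ v'" and u: "u = k @ u'"
    unfolding v'_def u'_def by (metis append_eq_conv_conj prefix_def)+
  have lcp: "\<forall>r. prefix r v \<and> prefix r u \<longrightarrow> prefix r k"
    unfolding k_def using longest_common_prefix_max_prefix by blast
  from assms obtain x y where "x \<le> e" "Xsim act z (x, v)" "y \<le> f" "Xsim act z (y, u)"
    by (auto simp: Xle_iff_Xsim_below)
  then have "Xsim act (x, k @ v') (y, k @ u')"
    using v u by (meson Xsim_sym Xsim_trans)
  with lcp v u obtain w where w: "act v' x = Some w" "act u' y = Some w"
    using Xsim_reduce_to_common_prefix by blast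
  have "x \<le> inf e (dgr act v')" "y \<le> inf f (dgr act u')"
    using w le_dgr \<open>x \<le> e\<close> \<open>y \<le> f\<close> by auto
  then have "w \<le> the (act v' (inf e (dgr act v')))" "w \<le> the (act u' (inf f (dgr act u')))"
    using act_le_iff[OF w(1) act_inf_dgr] act_le_iff[OF w(2) act_inf_dgr] by auto
  moreover have "Xsim act z (w, k)"
    using \<open>Xsim act z (x, v)\<close> Xsim_act[OF w(1)] v by (blast intro: Xsim_trans)
  ultimately show ?thesis
    unfolding v'_def u'_def by (auto simp: Xle_iff_Xsim_below)
qed

end

theorem lemma5p4:
  fixes act :: "'a list \<Rightarrow> 'y::semilattice_inf \<Rightarrow> 'y option"
  assumes "left_partial_action act"
    and "axiom_A act" and "axiom_B act" and "axiom_C act"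
    and "partially_defined_action act"
    and "ultra_F_restriction (Mset act) (Mmult act) (Mstar act) Mplus"
  shows "\<forall>e v f u.
     (let k = longest_common_prefix v u;
          v' = drop (length k) v;
          u' = drop (length k) u;
          m = (inf (the (act v' (inf e (dgr act v')))) (the (act u' (inf f (dgr act u')))), k)
      in Xle act m (e, v) \<and> Xle act m (f, u) \<and>
         (\<forall>z. Xle act z (e, v) \<and> Xle act z (f, u) \<longrightarrow> Xle act z m))"
proof -
  interpret ultra_F_partial_action act
    using assms by unfold_locales
  show ?thesis
    unfolding Let_def
    by (simp add: Xle_at_prefix Xle_longest_common_prefix
        longest_common_prefix_prefix1 longest_common_prefix_prefix2)
qed

end
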